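(* Let $G$ be a symmetric finite discounted stochastic game. Then for every $\epsilon \geq 0$, $G$ has the $\epsilon$-revision paths property: for every joint policy $\bm{\gamma}_0 \in \bm{\Delta}$ there exists a finite sequence of joint policies $\bm{\gamma}_0, \bm{\gamma}_1, \dots, \bm{\gamma}_L \in \bm{\Delta}$ which is an $\epsilon$-revision path and satisfies $\bm{\gamma}_L \in \bm{\Delta}^{\epsilon}_{\rm eq}$.
   Context: A finite discounted stochastic game is $G = (\mathcal{N}, \mathbb{X}, \{\mathbb{U}^i\}_{i\in\mathcal{N}}, \{c^i\}_{i\in\mathcal{N}}, \{\beta^i\}_{i\in\mathcal{N}}, P, \nu_0)$, where $\mathcal{N}$ is a finite set of players, $\mathbb{X}$ a finite state set, $\mathbb{U}^i$ a finite action set for player $i$, $\textbf{U} = \times_{i} \mathbb{U}^i$ the set of joint actions, $c^i : \mathbb{X}\times\textbf{U}\to\mathbb{R}$ the stage cost of player $i$, $\beta^i \in [0,1)$ its discount factor, $P(\cdot \mid x, \textbf{u})$ a transition kernel on $\mathbb{X}$ given $\mathbb{X}\times\textbf{U}$ governing $x_{t+1}$ given $(x_t,\textbf{u}_t)$, and $\nu_0$ the initial state distribution. A stationary policy of player $i$ is a stochastic kernel $\gamma^i$ from $\mathbb{X}$ to $\mathbb{U}^i$ (player $i$ picks $u^i_t \sim \gamma^i(\cdot\mid x_t)$, independently across players given the state); $\Delta^i$ is the set of these, $\bm{\Delta} = \times_i \Delta^i$, $\bm{\Delta}^{-i} = \times_{j\neq i}\Delta^j$, and a joint policy is written $\bm{\gamma}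 = (\gamma^i, \bm{\gamma}^{-i})$. The cost of player $i$ from state $x$ is $J^i_x(\bm{\gamma}) = E^{\bm{\gamma}}\big[\sum_{t\geq 0} (\beta^i)^t c^i(x_t,\textbf{u}_t) \mid x_0 = x\big]$. For $\epsilon \ge 0$, $\gamma^{i}$ is an $\epsilon$-best-response to $\bm{\gamma}^{-i}$ if $J^i_x(\gamma^i,\bm{\gamma}^{-i}) \leq \inf_{\pi^i\in\Delta^i} J^i_x(\pi^i,\bm{\gamma}^{-i}) + \epsilon$ for all $x\in\mathbb{X}$; ${\rm BR}^i_\epsilon(\bm{\gamma}^{-i})$ denotes the set of such policies. $\bm{\gamma}$ is an $\epsilon$-equilibrium if $\gamma^i \in {\rm BR}^i_\epsilon(\bm{\gamma}^{-i})$ for every $i$; $\bm{\Delta}^\epsilon_{\rm eq}$ is the set of $\epsilon$-equilibria. The game is symmetric if $\mathbb{U}^i = \mathbb{U}^j$ and $\beta^i=\beta^j$ for all $i,j$, and for every permutation $\sigma$ of $\mathcal{N}$, every $i$, every $x$ and every joint action $\textbf{a}$: $c^i(x,\sigma(\textbf{a})) = c^{\sigma(i)}(x,\textbf{a})$ and $P(\cdot\mid x,\textbf{a}) = P(\cdot \mid x,\sigma(\textbf{a}))$, where $\sigma(\textbf{a})$ is the joint action whose $i$-th component is $a^{\sigma(i)}$. A (possibly finite) sequence of joint policies $(\bm{\gamma}_k)_{k\ge 0}$ is an $\epsilon$-revision path if for every $k$ and every player $i$, $\gamma^i_k \in {\rm BR}^i_\epsilon(\bm{\gamma}^{-i}_k)$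 implies $\gamma^i_{k+1} = \gamma^i_k$. *)

theory Defs
  imports "HOL-Analysis.Analysis"
begin

text \<open>A finite discounted stochastic game is given by: a finite type of players 'i,
  a finite type of states 'x, action sets A i (finite, nonempty) inside an ambient type 'a,
  stage costs c i x u, discount factors beta i, and a transition kernel P x u y
  (probability of next state y given state x and joint action u).
  The initial distribution does not enter any of the notions below.\<close>

definition joint_actions :: "('i \<Rightarrow> 'a set) \<Rightarrow> ('i \<Rightarrow> 'a) set" where
  "joint_actions A = {u. \<forall>i. u i \<in> A i}"

definition stochastic_game ::
  "('i::finite \<Rightarrow> 'a set) \<Rightarrow> ('i \<Rightarrow> 'x::finite \<Rightarrow> ('i \<Rightarrow> 'a) \<Rightarrow> real)
   \<Rightarrow> ('i \<Rightarrow> real) \<Rightarrow> ('x \<Rightarrow> ('i \<Rightarrow> 'a) \<Rightarrow> 'x \<Rightarrow> real) \<Rightarrow> bool" where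
  "stochastic_game A c beta P \<longleftrightarrow>
     (\<forall>i. finite (A i) \<and> A i \<noteq> {}) \<and>
     (\<forall>i. 0 \<le> beta i \<and> beta i < 1) \<and>
     (\<forall>x. \<forall>u\<in>joint_actions A. (\<forall>y. 0 \<le> P x u y) \<and> (\<Sum>y\<in>UNIV. P x u y) = 1)"

definition is_policy :: "'a set \<Rightarrow> ('x \<Rightarrow> 'a \<Rightarrow> real) \<Rightarrow> bool" where
  "is_policy U g \<longleftrightarrow>
     (\<forall>x. (\<forall>a. 0 \<le> g x a) \<and> (\<forall>a. a \<notin> U \<longrightarrow> g x a = 0) \<and> (\<Sum>a\<in>U. g x a) = 1)"

definition joint_policies :: "('i \<Rightarrow> 'a set) \<Rightarrow> ('i \<Rightarrow> 'x \<Rightarrow> 'a \<Rightarrow> real) set" where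
  "joint_policies A = {\<gamma>. \<forall>i. is_policy (A i) (\<gamma> i)}"

definition joint_prob :: "('i::finite \<Rightarrow> 'x \<Rightarrow> 'a \<Rightarrow> real) \<Rightarrow> 'x \<Rightarrow> ('i \<Rightarrow> 'a) \<Rightarrow> real" where
  "joint_prob \<gamma> x u = (\<Prod>j\<in>UNIV. \<gamma> j x (u j))"

definition exp_cost where
  "exp_cost A c \<gamma> i x = (\<Sum>u\<in>joint_actions A. joint_prob \<gamma> x u * c i x u)"

definition trans_pol where
  "trans_pol A P \<gamma> x y = (\<Sum>u\<in>joint_actions A. joint_prob \<gamma> x u * P x u y)"

fun state_dist ::
  "('i::finite \<Rightarrow> 'a set) \<Rightarrow> ('x::finite \<Rightarrow> ('i \<Rightarrow> 'a) \<Rightarrow> 'x \<Rightarrow> real)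
   \<Rightarrow> ('i \<Rightarrow> 'x \<Rightarrow> 'a \<Rightarrow> real) \<Rightarrow> nat \<Rightarrow> 'x \<Rightarrow> 'x \<Rightarrow> real" where
  "state_dist A P \<gamma> 0 x y = (if x = y then 1 else 0)"
| "state_dist A P \<gamma> (Suc t) x y = (\<Sum>z\<in>UNIV. state_dist A P \<gamma> t x z * trans_pol A P \<gamma> z y)"

definition cost_J where
  "cost_J A c beta P i \<gamma> x =
     (\<Sum>t. beta i ^ t * (\<Sum>y\<in>UNIV. state_dist A P \<gamma> t x y * exp_cost A c \<gamma> i y))"

definition best_response where
  "best_response A c beta P eps i \<gamma> g \<longleftrightarrow>
     is_policy (A i) g \<and>
     (\<forall>x. cost_J A c beta P i (\<gamma>(i := g)) x
            \<le> (INF \<pi>\<in>{\<pi>. is_policy (A i) \<pi>}. cost_J A c beta P i (\<gamma>(i := \<pi>)) x) + eps)"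

definition is_equilibrium where
  "is_equilibrium A c beta P eps \<gamma> \<longleftrightarrow>
     \<gamma> \<in> joint_policies A \<and> (\<forall>i. best_response A c beta P eps i \<gamma> (\<gamma> i))"

definition revision_path where
  "revision_path A c beta P eps \<gamma>s L \<longleftrightarrow>
     (\<forall>k\<le>L. \<gamma>s k \<in> joint_policies A) \<and>
     (\<forall>k<L. \<forall>i. best_response A c beta P eps i (\<gamma>s k) (\<gamma>s k i)
                 \<longrightarrow> \<gamma>s (Suc k) i = \<gamma>s k i)"

text \<open>Symmetric game; sigma(a) is the joint action with i-th component a (sigma i), i.e. a o sigma.\<close>
definition symmetric_game where
  "symmetric_game A c beta P \<longleftrightarrow>
     (\<forall>i j. A i = A j \<and> beta i = beta j) \<and>
     (\<forall>\<sigma>. bij \<sigma> \<longrightarrow> (\<forall>i x a. a \<in> joint_actions A \<longrightarrow>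
         c i x (a \<circ> \<sigma>) = c (\<sigma> i) x a \<and> P x a = P x (a \<circ> \<sigma>)))"

end

theory Submission
  imports Defs
begin

(*
  If every player already plays an eps-best response, the constant path is an eps-revision path.
  If no player does, all players may revise at once and can jump directly to a stationary Nash
  equilibrium.  Such an equilibrium exists (Fink): it is a fixed point of Nash's improvement map,
  which shifts each player's probability towards actions whose one-step deviation lowers the cost;
  the product of simplices of stationary policies is a retract of a unit cube, so Brouwer's
  theorem applies, and a fixed point admits no profitable one-step deviation, hence, by a
  contraction argument on the Bellman equation, no profitable deviation at all.
  In the remaining case some player s is satisfied and some player u is not.  By symmetry,
  players using the same policy are satisfied simultaneously, so letting every unsatisfied player
  copy the policy of s is a legal revision that strictly decreases the number of distinct
  policies in use.  Induction on this number gives the path.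
*)

section \<open>Brouwer's fixed point theorem on the unit cube\<close>

definition unit_cube :: "nat \<Rightarrow> (nat \<Rightarrow> real) set" where
  "unit_cube N = {x. \<forall>i. (i < N \<longrightarrow> 0 \<le> x i \<and> x i \<le> 1) \<and> (N \<le> i \<longrightarrow> x i = 0)}"

lemma unit_cube_convergent_subseq:
  fixes xs :: "nat \<Rightarrow> nat \<Rightarrow> real"
  assumes "\<And>k. xs k \<in> unit_cube N"
  obtains r z where "strict_mono r" "z \<in> unit_cube N" "\<And>i. (\<lambda>k. xs (r k) i) \<longlonglongrightarrow> z i"
proof -
  have "bounded ((\<lambda>x. x i) ` range xs)" for i
  proof (rule bounded_subset[OF bounded_closed_interval[of 0 1]])
    have "xs k i \<in> {0..1}" for k
      using assms[of k] by (cases "i < N") (auto simp: unit_cube_def)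
    then show "(\<lambda>x. x i) ` range xs \<subseteq> {0..1}" by auto
  qed
  then obtain l r where r: "strict_mono r"
    and l: "\<forall>e>0. \<forall>\<^sub>F k in sequentially. \<forall>i\<in>{..<N}. dist (xs (r k) i) (l i) < e"
    using compact_lemma_general[where basis="{..<N}" and f=xs and unproj=id, of "\<lambda>x i. x i"] by auto
  define z where "z i = (if i < N then l i else 0)" for i
  have lim: "(\<lambda>k. xs (r k) i) \<longlonglongrightarrow> z i" for i
  proof (cases "i < N")
    case True
    then show ?thesis
      unfolding z_def tendsto_iff using l by (auto elim!: eventually_mono)
  next
    case False
    then show ?thesis using assms by (simp add: unit_cube_def z_def)
  qed
  have "z \<in> unit_cube N"
    unfolding unit_cube_def mem_Collect_eq
  proof (intro allI conjI impI)
    fix i assume "i < N"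
    have "\<And>k. 0 \<le> xs (r k) i \<and> xs (r k) i \<le> 1" using assms \<open>i < N\<close> by (auto simp: unit_cube_def)
    then show "0 \<le> z i" "z i \<le> 1"
      by (auto intro: LIMSEQ_le_const[OF lim] LIMSEQ_le_const2[OF lim])
  qed (simp add: z_def)
  then show ?thesis using that r lim by blast
qed

definition grid_point :: "nat \<Rightarrow> nat \<Rightarrow> (nat \<Rightarrow> nat) \<Rightarrow> nat \<Rightarrow> real" where
  "grid_point N p q = (\<lambda>j. if j < N then real (q j) / real p else 0)"

definition grid_cell :: "nat \<Rightarrow> (nat \<Rightarrow> nat) \<Rightarrow> (nat \<Rightarrow> nat) set" where
  "grid_cell N q = {u. \<forall>j<N. q j \<le> u j \<and> u j \<le> q j + 1}"

lemma grid_point_in_unit_cube: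
  assumes "0 < p" "\<forall>j<N. q j \<le> p"
  shows "grid_point N p q \<in> unit_cube N"
  using assms by (auto simp: grid_point_def unit_cube_def)

lemma grid_cell_in_unit_cube:
  assumes "0 < p" "\<forall>j<N. q j < p" "u \<in> grid_cell N q"
  shows "grid_point N p u \<in> unit_cube N"
proof (rule grid_point_in_unit_cube)
  show "\<forall>j<N. u j \<le> p"
    using assms(2,3) by (auto simp: grid_cell_def intro: order_trans[OF _ Suc_leI])
qed fact

lemma grid_cell_dist:
  assumes "u \<in> grid_cell N q"
  shows "\<bar>grid_point N p u j - grid_point N p q j\<bar> \<le> 1 / real p"
proof -
  have "\<bar>real (u j) - real (q j)\<bar> \<le> 1" if "j < N"
    using assms that by (auto simp: grid_cell_def)
  then show ?thesis
    by (auto simp: grid_point_def diff_divide_distrib[symmetric] abs_divide divide_right_mono)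
qed

lemma grid_cell_tendsto:
  assumes "strict_mono p" and "\<And>k. w k \<in> grid_cell N (q k)"
    and lim: "(\<lambda>k. grid_point N (p k) (q k) j) \<longlonglongrightarrow> z"
  shows "(\<lambda>k. grid_point N (p k) (w k) j) \<longlonglongrightarrow> z"
proof -
  have mesh: "(\<lambda>k. 1 / real (p k)) \<longlonglongrightarrow> 0"
    using LIMSEQ_subseq_LIMSEQ[OF lim_inverse_n' \<open>strict_mono p\<close>] by (simp add: o_def)
  have "(\<lambda>k. grid_point N (p k) (w k) j - grid_point N (p k) (q k) j) \<longlonglongrightarrow> 0"
    by (intro Lim_null_comparison[OF always_eventually mesh] allI)
      (unfold real_norm_def, rule grid_cell_dist[OF assms(2)])
  from tendsto_add[OF this lim] show ?thesis by simp
qed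

text \<open>Sperner's lemma, in the form of \<open>kuhn_lemma\<close>, applied to the labelling that marks
  in which direction \<open>f\<close> moves the \<open>i\<close>-th coordinate of a grid point.\<close>

lemma grid_cell_straddling_fixpoint:
  assumes "0 < p" and into: "\<And>x. x \<in> unit_cube N \<Longrightarrow> f x \<in> unit_cube N"
  obtains q where "\<forall>j<N. q j < p"
    and "\<And>i. i < N \<Longrightarrow> \<exists>u\<in>grid_cell N q. \<exists>v\<in>grid_cell N q.
           grid_point N p u i \<le> f (grid_point N p u) i \<and> f (grid_point N p v) i \<le> grid_point N p v i"
proof -
  define label where
    "label q i = (if grid_point N p q i \<noteq> 1 \<and> grid_point N p q i \<le> f (grid_point N p q) i
                  then 0 else 1::nat)" for q i
  have f_bounds: "0 \<le> f (grid_point N p q) i \<and> f (grid_point N p q) i \<le> 1"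
    if "\<forall>j<N. q j \<le> p" "i < N" for q i
    using into[OF grid_point_in_unit_cube[OF \<open>0 < p\<close>]] that by (auto simp: unit_cube_def)
  obtain q where q: "\<forall>j<N. q j < p"
    and cell: "\<forall>i<N. \<exists>u v. (\<forall>j<N. q j \<le> u j \<and> u j \<le> q j + 1) \<and>
                 (\<forall>j<N. q j \<le> v j \<and> v j \<le> q j + 1) \<and> label u i \<noteq> label v i"
  proof (rule kuhn_lemma[OF \<open>0 < p\<close>, of N label])
    show "\<forall>q. (\<forall>j<N. q j \<le> p) \<longrightarrow> (\<forall>i<N. label q i = 0 \<or> label q i = 1)"
      by (simp add: label_def)
    show "\<forall>q. (\<forall>j<N. q j \<le> p) \<longrightarrow> (\<forall>i<N. q i = 0 \<longrightarrow> label q i = 0)"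
      using f_bounds by (simp add: label_def grid_point_def)
    show "\<forall>q. (\<forall>j<N. q j \<le> p) \<longrightarrow> (\<forall>i<N. q i = p \<longrightarrow> label q i = 1)"
      using \<open>0 < p\<close> by (simp add: label_def grid_point_def)
  qed
  have label_0: "grid_point N p w i \<le> f (grid_point N p w) i" if "label w i = 0" for w i
    using that by (auto simp: label_def split: if_splits)
  have label_1: "f (grid_point N p w) i \<le> grid_point N p w i"
    if "label w i = 1" "w \<in> grid_cell N q" "i < N" for w i
    using that grid_cell_in_unit_cube[OF \<open>0 < p\<close> q that(2)] into
    by (auto simp: label_def unit_cube_def split: if_splits)
  show ?thesis
  proof (rule that[OF q])
    fix i assume "i < N"
    then obtain u v where "u \<in> grid_cell N q" "v \<in> grid_cell N q" "label u i \<noteq> label v i"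
      using cell by (auto simp: grid_cell_def)
    moreover have "label w i = 0 \<or> label w i = 1" for w
      by (simp add: label_def)
    ultimately show "\<exists>u\<in>grid_cell N q. \<exists>v\<in>grid_cell N q.
        grid_point N p u i \<le> f (grid_point N p u) i \<and> f (grid_point N p v) i \<le> grid_point N p v i"
      using label_0 label_1 \<open>i < N\<close> by metis
  qed
qed

lemma limit_of_straddling_grid_cells_fixpoint:
  assumes into: "\<And>x. x \<in> unit_cube N \<Longrightarrow> f x \<in> unit_cube N"
    and cont: "\<And>xs z i. (\<And>k. xs k \<in> unit_cube N) \<Longrightarrow> (\<And>j. (\<lambda>k. xs k j) \<longlonglongrightarrow> z j)
                 \<Longrightarrow> z \<in> unit_cube N \<Longrightarrow> (\<lambda>k. f (xs k) i) \<longlonglongrightarrow> f z i"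
    and p: "strict_mono p" "\<And>k. 0 < p k" and q: "\<And>k. \<forall>j<N. q k j < p k"
    and straddle: "\<And>k i. i < N \<Longrightarrow> \<exists>u\<in>grid_cell N (q k). \<exists>v\<in>grid_cell N (q k).
           grid_point N (p k) u i \<le> f (grid_point N (p k) u) i \<and>
           f (grid_point N (p k) v) i \<le> grid_point N (p k) v i"
    and z: "z \<in> unit_cube N" and lim: "\<And>j. (\<lambda>k. grid_point N (p k) (q k) j) \<longlonglongrightarrow> z j"
  shows "f z = z"
proof
  fix i
  show "f z i = z i"
  proof (cases "i < N")
    case True
    have "\<forall>k. \<exists>u v. u \<in> grid_cell N (q k) \<and> v \<in> grid_cell N (q k) \<and>
        grid_point N (p k) u i \<le> f (grid_point N (p k) u) i \<and>
        f (grid_point N (p k) v) i \<le> grid_point N (p k) v i"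
      using straddle[OF True] by blast
    then obtain U V where cells: "\<And>k. U k \<in> grid_cell N (q k)" "\<And>k. V k \<in> grid_cell N (q k)"
      and UV: "\<And>k. grid_point N (p k) (U k) i \<le> f (grid_point N (p k) (U k)) i"
        "\<And>k. f (grid_point N (p k) (V k)) i \<le> grid_point N (p k) (V k) i"
      by metis
    let ?u = "\<lambda>k. grid_point N (p k) (U k)" and ?v = "\<lambda>k. grid_point N (p k) (V k)"
    have u: "(\<lambda>k. ?u k j) \<longlonglongrightarrow> z j" and v: "(\<lambda>k. ?v k j) \<longlonglongrightarrow> z j" for j
      using grid_cell_tendsto[OF p(1) cells(1) lim] grid_cell_tendsto[OF p(1) cells(2) lim] .
    have cube: "?u k \<in> unit_cube N" "?v k \<in> unit_cube N" for k
      using grid_cell_in_unit_cube[OF p(2) q cells(1)] grid_cell_in_unit_cube[OF p(2) q cells(2)]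
      by blast+
    have "z i \<le> f z i"
      using LIMSEQ_le[OF u cont[OF cube(1) u z]] UV(1) by blast
    moreover have "f z i \<le> z i"
      using LIMSEQ_le[OF cont[OF cube(2) v z] v] UV(2) by blast
    ultimately show ?thesis by simp
  qed (use z into[OF z] in \<open>simp add: unit_cube_def\<close>)
qed

theorem brouwer_unit_cube:
  assumes into: "\<And>x. x \<in> unit_cube N \<Longrightarrow> f x \<in> unit_cube N"
    and cont: "\<And>xs z i. (\<And>k. xs k \<in> unit_cube N) \<Longrightarrow> (\<And>j. (\<lambda>k. xs k j) \<longlonglongrightarrow> z j)
                 \<Longrightarrow> z \<in> unit_cube N \<Longrightarrow> (\<lambda>k. f (xs k) i) \<longlonglongrightarrow> f z i"
  obtains z where "z \<in> unit_cube N" "f z = z"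
proof -
  have "\<exists>q. (\<forall>j<N. q j < Suc k) \<and> (\<forall>i<N. \<exists>u\<in>grid_cell N q. \<exists>v\<in>grid_cell N q.
           grid_point N (Suc k) u i \<le> f (grid_point N (Suc k) u) i \<and>
           f (grid_point N (Suc k) v) i \<le> grid_point N (Suc k) v i)" for k
    by (rule grid_cell_straddling_fixpoint[OF zero_less_Suc into]) blast+
  then obtain Q where Q: "\<And>k. \<forall>j<N. Q k j < Suc k"
    and straddle: "\<And>k i. i < N \<Longrightarrow> \<exists>u\<in>grid_cell N (Q k). \<exists>v\<in>grid_cell N (Q k).
           grid_point N (Suc k) u i \<le> f (grid_point N (Suc k) u) i \<and>
           f (grid_point N (Suc k) v) i \<le> grid_point N (Suc k) v i"
    by metis
  have "grid_point N (Suc k) (Q k) \<in> unit_cube N" for k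
    using Q[of k] by (intro grid_point_in_unit_cube) auto
  then obtain r z where r: "strict_mono r" and z: "z \<in> unit_cube N"
    and lim: "\<And>j. (\<lambda>k. grid_point N (Suc (r k)) (Q (r k)) j) \<longlonglongrightarrow> z j"
    using unit_cube_convergent_subseq[of "\<lambda>k. grid_point N (Suc k) (Q k)" N] by blast
  have "f z = z"
  proof (rule limit_of_straddling_grid_cells_fixpoint[OF into cont _ _ _ _ z lim])
    show "strict_mono (\<lambda>k. Suc (r k))"
      using r by (simp add: strict_mono_def)
  qed (use Q straddle in auto)
  with z show ?thesis using that by blast
qed

section \<open>Series, discounted comparison and the simplex retraction\<close>

lemma tendsto_suminf_dominated:
  fixes g :: "nat \<Rightarrow> nat \<Rightarrow> real"
  assumes bound: "\<And>k t. \<bar>g k t\<bar> \<le> b t" and "summable b"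
    and lim: "\<And>t. (\<lambda>k. g k t) \<longlonglongrightarrow> h t"
  shows "(\<lambda>k. \<Sum>t. g k t) \<longlonglongrightarrow> (\<Sum>t. h t)"
proof -
  have "\<bar>h t\<bar> \<le> b t" for t
    using bound by (intro LIMSEQ_le_const2[OF tendsto_rabs[OF lim]]) auto
  then have "summable h"
    by (intro summable_comparison_test[OF _ \<open>summable b\<close>]) auto
  have "uniform_limit UNIV (\<lambda>n k. \<Sum>t<n. g k t) (\<lambda>k. \<Sum>t. g k t) sequentially"
    using bound \<open>summable b\<close> by (intro Weierstrass_m_test[where M = b]) auto
  then show ?thesis
  proof (rule swap_uniform_limit'[where g = "\<lambda>n. \<Sum>t<n. h t", rotated 2])
    show "\<forall>\<^sub>F n in sequentially. ((\<lambda>k. \<Sum>t<n. g k t) \<longlongrightarrow> (\<Sum>t<n. h t)) sequentially"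
      by (intro always_eventually allI tendsto_sum lim)
    show "(\<lambda>n. \<Sum>t<n. h t) \<longlonglongrightarrow> (\<Sum>t. h t)"
      using summable_LIMSEQ[OF \<open>summable h\<close>] by simp
  qed auto
qed

lemma discounted_comparison:
  fixes V W :: "'x::finite \<Rightarrow> real"
  assumes "0 \<le> \<beta>" "\<beta> < 1" and K: "\<And>x y. 0 \<le> K x y" "\<And>x. (\<Sum>y\<in>UNIV. K x y) = 1"
    and step: "\<And>x. V x - W x \<le> \<beta> * (\<Sum>y\<in>UNIV. K x y * (V y - W y))"
  shows "V x \<le> W x"
proof -
  define D where "D = Max (range (\<lambda>y. V y - W y))"
  have le_D: "V y - W y \<le> D" for y
    unfolding D_def by (rule Max_ge) auto
  have "D \<in> range (\<lambda>y. V y - W y)"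
    unfolding D_def by (rule Max_in) auto
  then obtain y where "D = V y - W y" by blast
  also have "\<dots> \<le> \<beta> * (\<Sum>z\<in>UNIV. K y z * (V z - W z))"
    by (rule step)
  also have "\<dots> \<le> \<beta> * (\<Sum>z\<in>UNIV. K y z * D)"
    using K(1) le_D \<open>0 \<le> \<beta>\<close> by (intro mult_left_mono sum_mono) auto
  also have "\<dots> = \<beta> * D"
    by (simp add: sum_distrib_right[symmetric] K(2))
  finally have "D \<le> 0"
    using \<open>\<beta> < 1\<close> by (metis mult_le_cancel_right1 not_le)
  then show ?thesis using le_D[of x] by simp
qed

text \<open>On nonnegative vectors: a deficit of mass is spread uniformly over \<open>U\<close>, an excess is
  scaled away; probability vectors on \<open>U\<close> are fixed.\<close>

definition simplex_retract :: "'a set \<Rightarrow> ('a \<Rightarrow> real) \<Rightarrow> 'a \<Rightarrow> real" where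
  "simplex_retract U v a = (v a + max 0 (1 - sum v U) / card U) / max (sum v U) 1"

lemma simplex_retract_nonneg: "0 \<le> v a \<Longrightarrow> 0 \<le> simplex_retract U v a"
  by (simp add: simplex_retract_def)

lemma sum_simplex_retract:
  assumes "finite U" "U \<noteq> {}"
  shows "(\<Sum>a\<in>U. simplex_retract U v a) = 1"
proof -
  have "(\<Sum>a\<in>U. v a + max 0 (1 - sum v U) / card U) = max (sum v U) 1"
    using assms by (simp add: sum.distrib)
  then show ?thesis
    by (simp add: simplex_retract_def flip: sum_divide_distrib)
qed

lemma simplex_retract_id: "sum v U = 1 \<Longrightarrow> simplex_retract U v a = v a"
  by (simp add: simplex_retract_def)

lemma simplex_retract_cong:
  "(\<And>b. b \<in> U \<Longrightarrow> v b = w b) \<Longrightarrow> a \<in> U \<Longrightarrow> simplex_retract U v a = simplex_retract U w a"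
  by (simp add: simplex_retract_def cong: sum.cong)

lemma simplex_retract_tendsto:
  assumes "finite U" "U \<noteq> {}" "\<And>b. b \<in> insert a U \<Longrightarrow> (\<lambda>k. vs k b) \<longlonglongrightarrow> v b"
  shows "(\<lambda>k. simplex_retract U (vs k) a) \<longlonglongrightarrow> simplex_retract U v a"
  unfolding simplex_retract_def using assms
  by (intro tendsto_intros) auto

lemma is_policy_nonneg: "is_policy U g \<Longrightarrow> 0 \<le> g x a"
  and is_policy_outside: "is_policy U g \<Longrightarrow> a \<notin> U \<Longrightarrow> g x a = 0"
  and is_policy_sum: "is_policy U g \<Longrightarrow> (\<Sum>a\<in>U. g x a) = 1"
  by (simp_all add: is_policy_def)

lemma is_policy_le_1:
  assumes "is_policy U g" "finite U"
  shows "g x a \<le> 1"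
proof (cases "a \<in> U")
  case True
  then have "g x a \<le> (\<Sum>b\<in>U. g x b)"
    using assms by (intro member_le_sum) (auto simp: is_policy_nonneg)
  then show ?thesis using is_policy_sum[OF assms(1)] by simp
qed (simp add: is_policy_outside[OF assms(1)])

lemma joint_policies_update:
  "\<gamma> \<in> joint_policies A \<Longrightarrow> is_policy (A i) \<pi> \<Longrightarrow> \<gamma>(i := \<pi>) \<in> joint_policies A"
  by (simp add: joint_policies_def)

definition policies_tendsto :: "(nat \<Rightarrow> 'i \<Rightarrow> 'x \<Rightarrow> 'a \<Rightarrow> real) \<Rightarrow> ('i \<Rightarrow> 'x \<Rightarrow> 'a \<Rightarrow> real) \<Rightarrow> bool" where
  "policies_tendsto \<gamma>s \<gamma> \<longleftrightarrow> (\<forall>i x a. (\<lambda>k. \<gamma>s k i x a) \<longlonglongrightarrow> \<gamma> i x a)"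

lemma policies_tendstoD: "policies_tendsto \<gamma>s \<gamma> \<Longrightarrow> (\<lambda>k. \<gamma>s k i x a) \<longlonglongrightarrow> \<gamma> i x a"
  by (simp add: policies_tendsto_def)

lemma policies_tendsto_update:
  "policies_tendsto \<gamma>s \<gamma> \<Longrightarrow> policies_tendsto (\<lambda>k. (\<gamma>s k)(i := \<pi>)) (\<gamma>(i := \<pi>))"
  by (simp add: policies_tendsto_def)

lemma joint_prob_tendsto:
  "policies_tendsto \<gamma>s \<gamma> \<Longrightarrow> (\<lambda>k. joint_prob (\<gamma>s k) x u) \<longlonglongrightarrow> joint_prob \<gamma> x u"
  unfolding joint_prob_def by (intro tendsto_prod policies_tendstoD)

lemma joint_prob_permute:
  assumes "bij \<sigma>"
  shows "joint_prob (\<gamma> \<circ> \<sigma>) x (u \<circ> \<sigma>) = joint_prob \<gamma> x u"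
  unfolding joint_prob_def
  using prod.reindex_bij_betw[of \<sigma> UNIV UNIV "\<lambda>j. \<gamma> j x (u j)"] assms by simp

lemma revision_path_const:
  "\<gamma> \<in> joint_policies A \<Longrightarrow> revision_path A c beta P eps (\<lambda>_. \<gamma>) 0"
  by (simp add: revision_path_def)

lemma revision_path_Cons:
  assumes "\<gamma> \<in> joint_policies A"
    and "\<And>i. best_response A c beta P eps i \<gamma> (\<gamma> i) \<Longrightarrow> \<gamma>s 0 i = \<gamma> i"
    and "revision_path A c beta P eps \<gamma>s L"
  shows "revision_path A c beta P eps (case_nat \<gamma> \<gamma>s) (Suc L)"
  unfolding revision_path_def
proof (intro conjI allI impI)
  fix k assume "k \<le> Suc L"
  then show "case_nat \<gamma> \<gamma>s k \<in> joint_policies A"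
    using assms by (cases k) (auto simp: revision_path_def)
next
  fix k i assume "k < Suc L" "best_response A c beta P eps i (case_nat \<gamma> \<gamma>s k) (case_nat \<gamma> \<gamma>s k i)"
  then show "case_nat \<gamma> \<gamma>s (Suc k) i = case_nat \<gamma> \<gamma>s k i"
    using assms by (cases k) (auto simp: revision_path_def)
qed

section \<open>Discounted costs and the Bellman equation\<close>

locale discounted_game =
  fixes A :: "'i::finite \<Rightarrow> 'a set"
    and c :: "'i \<Rightarrow> 'x::finite \<Rightarrow> ('i \<Rightarrow> 'a) \<Rightarrow> real"
    and beta :: "'i \<Rightarrow> real"
    and P :: "'x \<Rightarrow> ('i \<Rightarrow> 'a) \<Rightarrow> 'x \<Rightarrow> real"
  assumes game: "stochastic_game A c beta P"
begin

abbreviation JA :: "('i \<Rightarrow> 'a) set" where "JA \<equiv> joint_actions A"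

abbreviation JP :: "('i \<Rightarrow> 'x \<Rightarrow> 'a \<Rightarrow> real) set" where "JP \<equiv> joint_policies A"

abbreviation E :: "('i \<Rightarrow> 'x \<Rightarrow> 'a \<Rightarrow> real) \<Rightarrow> 'i \<Rightarrow> 'x \<Rightarrow> real" where
  "E \<equiv> exp_cost A c"

abbreviation T :: "('i \<Rightarrow> 'x \<Rightarrow> 'a \<Rightarrow> real) \<Rightarrow> 'x \<Rightarrow> 'x \<Rightarrow> real" where
  "T \<equiv> trans_pol A P"

abbreviation J :: "'i \<Rightarrow> ('i \<Rightarrow> 'x \<Rightarrow> 'a \<Rightarrow> real) \<Rightarrow> 'x \<Rightarrow> real" where
  "J \<equiv> cost_J A c beta P"

lemma finite_actions: "finite (A i)"
  and actions_nonempty: "A i \<noteq> {}"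
  and discount_nonneg: "0 \<le> beta i"
  and discount_less_1: "beta i < 1"
  using game by (auto simp: stochastic_game_def)

lemma transition_nonneg: "u \<in> JA \<Longrightarrow> 0 \<le> P x u y"
  and transition_sum: "u \<in> JA \<Longrightarrow> (\<Sum>y\<in>UNIV. P x u y) = 1"
  using game by (auto simp: stochastic_game_def)

lemma joint_actions_PiE: "JA = PiE UNIV A"
  by (auto simp: joint_actions_def PiE_def Pi_def extensional_def)

lemma finite_joint_actions: "finite JA"
  unfolding joint_actions_PiE by (intro finite_PiE finite_actions) auto

lemma joint_prob_nonneg: "\<gamma> \<in> JP \<Longrightarrow> 0 \<le> joint_prob \<gamma> x u"
  unfolding joint_prob_def joint_policies_def by (intro prod_nonneg) (simp add: is_policy_def)

lemma sum_joint_prob: "\<gamma> \<in> JP \<Longrightarrow> (\<Sum>u\<in>JA. joint_prob \<gamma> x u) = 1"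
proof -
  assume "\<gamma> \<in> JP"
  then have "(\<Prod>j\<in>UNIV. \<Sum>a\<in>A j. \<gamma> j x a) = 1"
    by (simp add: joint_policies_def is_policy_sum)
  then show ?thesis
    by (simp add: prod_sum_PiE finite_actions joint_actions_PiE joint_prob_def)
qed

lemma expectation_joint_prob_le:
  assumes "\<gamma> \<in> JP" "\<And>u. u \<in> JA \<Longrightarrow> \<bar>h u\<bar> \<le> M"
  shows "\<bar>\<Sum>u\<in>JA. joint_prob \<gamma> x u * h u\<bar> \<le> M"
proof -
  have "\<bar>\<Sum>u\<in>JA. joint_prob \<gamma> x u * h u\<bar> \<le> (\<Sum>u\<in>JA. joint_prob \<gamma> x u * M)"
    using assms joint_prob_nonneg[OF assms(1)]
    by (intro order_trans[OF sum_abs] sum_mono) (auto simp: abs_mult intro: mult_left_mono)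
  then show ?thesis
    by (simp add: sum_distrib_right[symmetric] sum_joint_prob[OF assms(1)])
qed

lemma trans_pol_nonneg: "\<gamma> \<in> JP \<Longrightarrow> 0 \<le> T \<gamma> x y"
  unfolding trans_pol_def by (intro sum_nonneg mult_nonneg_nonneg joint_prob_nonneg transition_nonneg)

lemma sum_trans_pol: "\<gamma> \<in> JP \<Longrightarrow> (\<Sum>y\<in>UNIV. T \<gamma> x y) = 1"
  unfolding trans_pol_def
  by (subst sum.swap) (simp add: sum_distrib_left[symmetric] transition_sum sum_joint_prob)

lemma state_dist_nonneg: "\<gamma> \<in> JP \<Longrightarrow> 0 \<le> state_dist A P \<gamma> t x y"
  by (induction t arbitrary: y) (auto intro!: sum_nonneg mult_nonneg_nonneg trans_pol_nonneg)

lemma sum_state_dist: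
  assumes "\<gamma> \<in> JP"
  shows "(\<Sum>y\<in>UNIV. state_dist A P \<gamma> t x y) = 1"
proof (induction t)
  case (Suc t)
  have "(\<Sum>y\<in>UNIV. state_dist A P \<gamma> (Suc t) x y)
      = (\<Sum>z\<in>UNIV. state_dist A P \<gamma> t x z * (\<Sum>y\<in>UNIV. T \<gamma> z y))"
    by (simp add: sum_distrib_left, subst sum.swap) simp
  then show ?case using Suc sum_trans_pol[OF assms] by simp
qed simp

lemma state_dist_Suc_left:
  "state_dist A P \<gamma> (Suc t) x y = (\<Sum>z\<in>UNIV. T \<gamma> x z * state_dist A P \<gamma> t z y)"
proof (induction t arbitrary: y)
  case (Suc t)
  have "state_dist A P \<gamma> (Suc (Suc t)) x y
      = (\<Sum>w\<in>UNIV. (\<Sum>z\<in>UNIV. T \<gamma> x z * state_dist A P \<gamma> t z w) * T \<gamma> w y)"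
    using Suc by simp
  also have "\<dots> = (\<Sum>z\<in>UNIV. T \<gamma> x z * (\<Sum>w\<in>UNIV. state_dist A P \<gamma> t z w * T \<gamma> w y))"
    unfolding sum_distrib_left sum_distrib_right by (subst sum.swap) (simp add: mult.assoc)
  finally show ?case by simp
qed (simp add: of_bool_def[symmetric])

definition stage_cost :: "('i \<Rightarrow> 'x \<Rightarrow> 'a \<Rightarrow> real) \<Rightarrow> 'i \<Rightarrow> nat \<Rightarrow> 'x \<Rightarrow> real" where
  "stage_cost \<gamma> i t x = (\<Sum>y\<in>UNIV. state_dist A P \<gamma> t x y * E \<gamma> i y)"

lemma cost_J_stage_cost: "J i \<gamma> x = (\<Sum>t. beta i ^ t * stage_cost \<gamma> i t x)"
  unfolding cost_J_def stage_cost_def ..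

lemma stage_cost_0: "stage_cost \<gamma> i 0 x = E \<gamma> i x"
  by (simp add: stage_cost_def of_bool_def[symmetric])

lemma stage_cost_Suc: "stage_cost \<gamma> i (Suc t) x = (\<Sum>z\<in>UNIV. T \<gamma> x z * stage_cost \<gamma> i t z)"
  unfolding stage_cost_def state_dist_Suc_left sum_distrib_left sum_distrib_right
  by (subst sum.swap) (simp add: mult.assoc)

definition cost_bound :: real where
  "cost_bound = Max ((\<lambda>(i, x, u). \<bar>c i x u\<bar>) ` (UNIV \<times> UNIV \<times> JA))"

lemma abs_cost_le: "u \<in> JA \<Longrightarrow> \<bar>c i x u\<bar> \<le> cost_bound"
  unfolding cost_bound_def
  by (rule Max_ge) (auto simp: finite_joint_actions intro!: image_eqI[where x = "(i, x, u)"])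

lemma abs_stage_cost_le: "\<gamma> \<in> JP \<Longrightarrow> \<bar>stage_cost \<gamma> i t x\<bar> \<le> cost_bound"
proof -
  assume "\<gamma> \<in> JP"
  have "\<bar>E \<gamma> i y\<bar> \<le> cost_bound" for y
    unfolding exp_cost_def by (intro expectation_joint_prob_le \<open>\<gamma> \<in> JP\<close> abs_cost_le)
  then have "\<bar>stage_cost \<gamma> i t x\<bar> \<le> (\<Sum>y\<in>UNIV. state_dist A P \<gamma> t x y * cost_bound)"
    unfolding stage_cost_def using state_dist_nonneg[OF \<open>\<gamma> \<in> JP\<close>]
    by (intro order_trans[OF sum_abs] sum_mono) (auto simp: abs_mult intro: mult_left_mono)
  then show ?thesis
    by (simp add: sum_distrib_right[symmetric] sum_state_dist[OF \<open>\<gamma> \<in> JP\<close>])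
qed

lemma abs_discounted_stage_cost_le:
  "\<gamma> \<in> JP \<Longrightarrow> \<bar>beta i ^ t * stage_cost \<gamma> i t x\<bar> \<le> beta i ^ t * cost_bound"
  using abs_stage_cost_le discount_nonneg by (simp add: abs_mult mult_left_mono)

lemma summable_discounted_bound: "summable (\<lambda>t. beta i ^ t * cost_bound)"
  using discount_nonneg discount_less_1 by (intro summable_mult2 summable_geometric) auto

lemma summable_discounted_stage_cost:
  "\<gamma> \<in> JP \<Longrightarrow> summable (\<lambda>t. beta i ^ t * stage_cost \<gamma> i t x)"
  by (rule summable_comparison_test[OF _ summable_discounted_bound[of i]])
    (use abs_discounted_stage_cost_le in auto)

definition bellman_op :: "('i \<Rightarrow> 'x \<Rightarrow> 'a \<Rightarrow> real) \<Rightarrow> 'i \<Rightarrow> ('x \<Rightarrow> real) \<Rightarrow> 'x \<Rightarrow> real" where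
  "bellman_op \<gamma> i V x = E \<gamma> i x + beta i * (\<Sum>y\<in>UNIV. T \<gamma> x y * V y)"

lemma cost_J_bellman:
  assumes "\<gamma> \<in> JP"
  shows "J i \<gamma> x = bellman_op \<gamma> i (J i \<gamma>) x"
proof -
  note summable = summable_discounted_stage_cost[OF assms]
  have "J i \<gamma> x = (\<Sum>t. beta i ^ Suc t * stage_cost \<gamma> i (Suc t) x) + E \<gamma> i x"
    unfolding cost_J_stage_cost suminf_split_head[OF summable] by (simp add: stage_cost_0)
  also have "(\<Sum>t. beta i ^ Suc t * stage_cost \<gamma> i (Suc t) x)
           = (\<Sum>t. beta i * (\<Sum>y\<in>UNIV. T \<gamma> x y * (beta i ^ t * stage_cost \<gamma> i t y)))"
    by (simp add: stage_cost_Suc sum_distrib_left mult_ac)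
  also have "\<dots> = beta i * (\<Sum>y\<in>UNIV. \<Sum>t. T \<gamma> x y * (beta i ^ t * stage_cost \<gamma> i t y))"
    using summable by (simp add: suminf_mult suminf_sum summable_sum summable_mult)
  also have "\<dots> = beta i * (\<Sum>y\<in>UNIV. T \<gamma> x y * J i \<gamma> y)"
    using summable by (simp add: cost_J_stage_cost suminf_mult)
  finally show ?thesis unfolding bellman_op_def by linarith
qed

lemma bellman_op_expand:
  "bellman_op \<gamma> i V x = (\<Sum>u\<in>JA. joint_prob \<gamma> x u * (c i x u + beta i * (\<Sum>y\<in>UNIV. P x u y * V y)))"
proof -
  have "(\<Sum>y\<in>UNIV. T \<gamma> x y * V y) = (\<Sum>u\<in>JA. joint_prob \<gamma> x u * (\<Sum>y\<in>UNIV. P x u y * V y))"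
    unfolding trans_pol_def sum_distrib_left sum_distrib_right
    by (subst sum.swap) (simp add: mult.assoc)
  then show ?thesis
    unfolding bellman_op_def exp_cost_def
    by (simp add: distrib_left sum.distrib sum_distrib_left mult.left_commute)
qed

lemma bellman_op_diff:
  "bellman_op \<gamma> i V x - bellman_op \<gamma> i W x = beta i * (\<Sum>y\<in>UNIV. T \<gamma> x y * (V y - W y))"
  by (simp add: bellman_op_def right_diff_distrib sum_subtractf)

definition pure_policy :: "'a \<Rightarrow> 'x \<Rightarrow> 'a \<Rightarrow> real" where
  "pure_policy a = (\<lambda>_ b. if b = a then 1 else 0)"

definition action_value :: "('i \<Rightarrow> 'x \<Rightarrow> 'a \<Rightarrow> real) \<Rightarrow> 'i \<Rightarrow> ('x \<Rightarrow> real) \<Rightarrow> 'x \<Rightarrow> 'a \<Rightarrow> real" where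
  "action_value \<gamma> i V x a = bellman_op (\<gamma>(i := pure_policy a)) i V x"

lemma sum_pure_policy_joint_prob:
  assumes "u \<in> JA"
  shows "(\<Sum>a\<in>A i. \<pi> x a * joint_prob (\<gamma>(i := pure_policy a)) x u) = joint_prob (\<gamma>(i := \<pi>)) x u"
proof -
  let ?R = "\<Prod>j\<in>UNIV - {i}. \<gamma> j x (u j)"
  have split: "joint_prob (\<gamma>(i := \<rho>)) x u = \<rho> x (u i) * ?R" for \<rho>
    unfolding joint_prob_def by (subst prod.remove[of _ i]) auto
  have "u i \<in> A i" using assms by (simp add: joint_actions_def)
  have "(\<Sum>a\<in>A i. \<pi> x a * (pure_policy a x (u i) * ?R)) = (\<Sum>a\<in>A i. if a = u i then \<pi> x a * ?R else 0)"
    by (rule sum.cong) (auto simp: pure_policy_def)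
  also have "\<dots> = \<pi> x (u i) * ?R"
    using \<open>u i \<in> A i\<close> by (simp add: finite_actions)
  finally show ?thesis unfolding split .
qed

lemma sum_action_value:
  "(\<Sum>a\<in>A i. \<pi> x a * action_value \<gamma> i V x a) = bellman_op (\<gamma>(i := \<pi>)) i V x"
proof -
  let ?h = "\<lambda>u. c i x u + beta i * (\<Sum>y\<in>UNIV. P x u y * V y)"
  have "(\<Sum>a\<in>A i. \<pi> x a * action_value \<gamma> i V x a)
      = (\<Sum>a\<in>A i. \<Sum>u\<in>JA. \<pi> x a * joint_prob (\<gamma>(i := pure_policy a)) x u * ?h u)"
    by (simp add: action_value_def bellman_op_expand sum_distrib_left mult.assoc)
  also have "\<dots> = (\<Sum>u\<in>JA. (\<Sum>a\<in>A i. \<pi> x a * joint_prob (\<gamma>(i := pure_policy a)) x u) * ?h u)"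
    by (subst sum.swap) (simp add: sum_distrib_right)
  also have "\<dots> = bellman_op (\<gamma>(i := \<pi>)) i V x"
    by (simp add: bellman_op_expand sum_pure_policy_joint_prob)
  finally show ?thesis .
qed

lemma cost_J_le_deviation_if_no_better_action:
  assumes "\<gamma> \<in> JP" and no_better: "\<And>x a. a \<in> A i \<Longrightarrow> J i \<gamma> x \<le> action_value \<gamma> i (J i \<gamma>) x a"
    and "is_policy (A i) \<pi>"
  shows "J i \<gamma> x \<le> J i (\<gamma>(i := \<pi>)) x"
proof (rule discounted_comparison[OF discount_nonneg discount_less_1])
  let ?\<gamma>' = "\<gamma>(i := \<pi>)"
  have "?\<gamma>' \<in> JP" using assms by (simp add: joint_policies_update)
  then show "0 \<le> T ?\<gamma>' x y" "(\<Sum>y\<in>UNIV. T ?\<gamma>' x y) = 1" for x y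
    by (simp_all add: trans_pol_nonneg sum_trans_pol)
  fix x
  have "J i \<gamma> x = (\<Sum>a\<in>A i. \<pi> x a * J i \<gamma> x)"
    using \<open>is_policy (A i) \<pi>\<close> by (simp add: is_policy_sum flip: sum_distrib_right)
  also have "\<dots> \<le> (\<Sum>a\<in>A i. \<pi> x a * action_value \<gamma> i (J i \<gamma>) x a)"
    using \<open>is_policy (A i) \<pi>\<close> no_better
    by (intro sum_mono mult_left_mono) (auto simp: is_policy_nonneg)
  also have "\<dots> = bellman_op ?\<gamma>' i (J i \<gamma>) x"
    by (rule sum_action_value)
  finally show "J i \<gamma> x - J i ?\<gamma>' x \<le> beta i * (\<Sum>y\<in>UNIV. T ?\<gamma>' x y * (J i \<gamma> y - J i ?\<gamma>' y))"
    using cost_J_bellman[OF \<open>?\<gamma>' \<in> JP\<close>, of i x] bellman_op_diff[of ?\<gamma>' i "J i \<gamma>" x "J i ?\<gamma>'"]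
    by linarith
qed

lemma equilibrium_if_no_better_action:
  assumes "\<gamma> \<in> JP" "eps \<ge> 0"
    and no_better: "\<And>i x a. a \<in> A i \<Longrightarrow> J i \<gamma> x \<le> action_value \<gamma> i (J i \<gamma>) x a"
  shows "is_equilibrium A c beta P eps \<gamma>"
  unfolding is_equilibrium_def best_response_def
proof (intro conjI allI)
  fix i x
  have "is_policy (A i) (\<gamma> i)" using assms(1) by (simp add: joint_policies_def)
  then have "J i \<gamma> x \<le> (INF \<pi>\<in>{\<pi>. is_policy (A i) \<pi>}. J i (\<gamma>(i := \<pi>)) x)"
    using assms(1) no_better by (intro cINF_greatest cost_J_le_deviation_if_no_better_action) auto
  then show "J i (\<gamma>(i := \<gamma> i)) x \<le> (INF \<pi>\<in>{\<pi>. is_policy (A i) \<pi>}. J i (\<gamma>(i := \<pi>)) x) + eps"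
    using \<open>eps \<ge> 0\<close> by simp
qed (use assms(1) in \<open>simp_all add: joint_policies_def\<close>)

section \<open>Existence of stationary equilibria\<close>

definition gain :: "('i \<Rightarrow> 'x \<Rightarrow> 'a \<Rightarrow> real) \<Rightarrow> 'i \<Rightarrow> 'x \<Rightarrow> 'a \<Rightarrow> real" where
  "gain \<gamma> i x a = max 0 (J i \<gamma> x - action_value \<gamma> i (J i \<gamma>) x a)"

definition nash_map :: "('i \<Rightarrow> 'x \<Rightarrow> 'a \<Rightarrow> real) \<Rightarrow> 'i \<Rightarrow> 'x \<Rightarrow> 'a \<Rightarrow> real" where
  "nash_map \<gamma> i x a =
     (if a \<in> A i then (\<gamma> i x a + gain \<gamma> i x a) / (1 + (\<Sum>b\<in>A i. gain \<gamma> i x b)) else 0)"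

lemma gain_nonneg: "0 \<le> gain \<gamma> i x a"
  by (simp add: gain_def)

lemma sum_gain_nonneg: "0 \<le> (\<Sum>b\<in>A i. gain \<gamma> i x b)"
  by (intro sum_nonneg gain_nonneg)

lemma nash_map_in_joint_policies:
  assumes "\<gamma> \<in> JP"
  shows "nash_map \<gamma> \<in> JP"
  unfolding joint_policies_def is_policy_def mem_Collect_eq
proof (intro allI conjI impI)
  fix i x a
  have pol: "is_policy (A i) (\<gamma> i)" using assms by (simp add: joint_policies_def)
  have pos: "0 < 1 + (\<Sum>b\<in>A i. gain \<gamma> i x b)"
    using sum_gain_nonneg[of \<gamma> i x] by linarith
  then show "0 \<le> nash_map \<gamma> i x a"
    using is_policy_nonneg[OF pol] gain_nonneg by (simp add: nash_map_def)
  show "a \<notin> A i \<Longrightarrow> nash_map \<gamma> i x a = 0"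
    by (simp add: nash_map_def)
  have "(\<Sum>a\<in>A i. nash_map \<gamma> i x a)
      = (\<Sum>a\<in>A i. \<gamma> i x a + gain \<gamma> i x a) / (1 + (\<Sum>b\<in>A i. gain \<gamma> i x b))"
    by (simp add: nash_map_def sum_divide_distrib)
  also have "\<dots> = 1"
    using pos is_policy_sum[OF pol] by (simp add: sum.distrib)
  finally show "(\<Sum>a\<in>A i. nash_map \<gamma> i x a) = 1" .
qed

lemma sum_policy_action_value:
  assumes "\<gamma> \<in> JP"
  shows "(\<Sum>b\<in>A i. \<gamma> i x b * action_value \<gamma> i (J i \<gamma>) x b) = J i \<gamma> x"
  using sum_action_value[of "\<gamma> i" x \<gamma> i "J i \<gamma>"] cost_J_bellman[OF assms, symmetric] by simp

lemma gain_eq_if_nash_fixpoint: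
  assumes "nash_map \<gamma> = \<gamma>" "b \<in> A i"
  shows "gain \<gamma> i x b = \<gamma> i x b * (\<Sum>b\<in>A i. gain \<gamma> i x b)"
proof -
  have "\<gamma> i x b = (\<gamma> i x b + gain \<gamma> i x b) / (1 + (\<Sum>b\<in>A i. gain \<gamma> i x b))"
    using fun_cong[OF fun_cong[OF fun_cong[OF assms(1)]], of i x b] assms(2)
    by (simp add: nash_map_def)
  with sum_gain_nonneg[of \<gamma> i x] show ?thesis
    by (simp add: field_simps)
qed

text \<open>If the total gain \<open>G\<close> were positive, every action \<open>b\<close> used by \<open>\<gamma>\<close> would have gain
  \<open>\<gamma> b * G > 0\<close>, so averaging \<open>J - action_value\<close> against \<open>\<gamma>\<close>, which gives 0 by the Bellman
  equation, would give \<open>G * (\<Sum>b. \<gamma> b\<^sup>2) > 0\<close>.\<close>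

lemma no_better_action_if_nash_fixpoint:
  assumes "\<gamma> \<in> JP" "nash_map \<gamma> = \<gamma>" "a \<in> A i"
  shows "J i \<gamma> x \<le> action_value \<gamma> i (J i \<gamma>) x a"
proof -
  define G where "G = (\<Sum>b\<in>A i. gain \<gamma> i x b)"
  define Q where "Q b = action_value \<gamma> i (J i \<gamma>) x b" for b
  have pol: "is_policy (A i) (\<gamma> i)" using assms(1) by (simp add: joint_policies_def)
  have avg: "(\<Sum>b\<in>A i. \<gamma> i x b * (J i \<gamma> x - Q b)) = 0"
    using sum_policy_action_value[OF assms(1)] is_policy_sum[OF pol]
    by (simp add: Q_def right_diff_distrib sum_subtractf flip: sum_distrib_right)
  have squares: "0 < (\<Sum>b\<in>A i. \<gamma> i x b ^ 2)"
  proof -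
    obtain b where "b \<in> A i" "\<gamma> i x b \<noteq> 0"
      using is_policy_sum[OF pol, of x] by (metis sum.neutral zero_neq_one)
    then show ?thesis by (intro sum_pos2[of _ b]) (auto simp: finite_actions)
  qed
  have weighted: "\<gamma> i x b * (J i \<gamma> x - Q b) = G * \<gamma> i x b ^ 2" if "G > 0" "b \<in> A i" for b
  proof (cases "\<gamma> i x b = 0")
    case False
    then have "0 < \<gamma> i x b" using is_policy_nonneg[OF pol, of x b] by simp
    then have "J i \<gamma> x - Q b = \<gamma> i x b * G"
      using gain_eq_if_nash_fixpoint[OF assms(2) that(2), of x] mult_pos_pos[OF _ \<open>G > 0\<close>]
      by (auto simp: gain_def Q_def G_def max_def split: if_splits)
    then show ?thesis by (simp add: power2_eq_square)
  qed simp
  have "\<not> G > 0"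
  proof
    assume "G > 0"
    then have "(\<Sum>b\<in>A i. \<gamma> i x b * (J i \<gamma> x - Q b)) = G * (\<Sum>b\<in>A i. \<gamma> i x b ^ 2)"
      using weighted by (simp add: sum_distrib_left)
    with avg squares \<open>G > 0\<close> show False by simp
  qed
  then have "G = 0" using sum_gain_nonneg[of \<gamma> i x] by (simp add: G_def)
  then show ?thesis
    using gain_eq_if_nash_fixpoint[OF assms(2,3), of x] by (simp add: G_def gain_def)
qed

lemma equilibrium_if_nash_fixpoint:
  "\<gamma> \<in> JP \<Longrightarrow> nash_map \<gamma> = \<gamma> \<Longrightarrow> eps \<ge> 0 \<Longrightarrow> is_equilibrium A c beta P eps \<gamma>"
  by (intro equilibrium_if_no_better_action no_better_action_if_nash_fixpoint)

lemma exp_cost_tendsto: "policies_tendsto \<gamma>s \<gamma> \<Longrightarrow> (\<lambda>k. E (\<gamma>s k) i x) \<longlonglongrightarrow> E \<gamma> i x"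
  unfolding exp_cost_def by (intro tendsto_intros joint_prob_tendsto)

lemma trans_pol_tendsto: "policies_tendsto \<gamma>s \<gamma> \<Longrightarrow> (\<lambda>k. T (\<gamma>s k) x y) \<longlonglongrightarrow> T \<gamma> x y"
  unfolding trans_pol_def by (intro tendsto_intros joint_prob_tendsto)

lemma stage_cost_tendsto:
  assumes "policies_tendsto \<gamma>s \<gamma>"
  shows "(\<lambda>k. stage_cost (\<gamma>s k) i t x) \<longlonglongrightarrow> stage_cost \<gamma> i t x"
proof -
  have "(\<lambda>k. state_dist A P (\<gamma>s k) t x y) \<longlonglongrightarrow> state_dist A P \<gamma> t x y" for y
    by (induction t arbitrary: y) (auto intro!: tendsto_intros trans_pol_tendsto assms)
  then show ?thesis
    unfolding stage_cost_def by (intro tendsto_intros exp_cost_tendsto assms)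
qed

lemma cost_J_tendsto:
  assumes "policies_tendsto \<gamma>s \<gamma>" "\<And>k. \<gamma>s k \<in> JP"
  shows "(\<lambda>k. J i (\<gamma>s k) x) \<longlonglongrightarrow> J i \<gamma> x"
  unfolding cost_J_stage_cost
  using abs_discounted_stage_cost_le[OF assms(2)] summable_discounted_bound
  by (intro tendsto_suminf_dominated tendsto_intros stage_cost_tendsto assms(1))

lemma nash_map_tendsto:
  assumes "policies_tendsto \<gamma>s \<gamma>" "\<And>k. \<gamma>s k \<in> JP"
  shows "policies_tendsto (\<lambda>k. nash_map (\<gamma>s k)) (nash_map \<gamma>)"
  unfolding policies_tendsto_def
proof (intro allI)
  fix i x a
  have "(\<lambda>k. gain (\<gamma>s k) i x b) \<longlonglongrightarrow> gain \<gamma> i x b" for b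
    unfolding gain_def action_value_def bellman_op_def
    using assms policies_tendsto_update[OF assms(1)]
    by (intro tendsto_intros cost_J_tendsto exp_cost_tendsto trans_pol_tendsto) auto
  moreover have "1 + (\<Sum>b\<in>A i. gain \<gamma> i x b) \<noteq> 0"
    using sum_gain_nonneg[of \<gamma> i x] by linarith
  ultimately show "(\<lambda>k. nash_map (\<gamma>s k) i x a) \<longlonglongrightarrow> nash_map \<gamma> i x a"
    unfolding nash_map_def using policies_tendstoD[OF assms(1)]
    by (auto intro!: tendsto_intros)
qed

definition policy_coords :: "('i \<times> 'x \<times> 'a) set" where
  "policy_coords = (SIGMA i:UNIV. UNIV \<times> A i)"

definition coord_index :: "'i \<times> 'x \<times> 'a \<Rightarrow> nat" where
  "coord_index = (SOME h. bij_betw h policy_coords {0..<card policy_coords})"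

definition encode_policy :: "('i \<Rightarrow> 'x \<Rightarrow> 'a \<Rightarrow> real) \<Rightarrow> nat \<Rightarrow> real" where
  "encode_policy \<gamma> n =
     (if n < card policy_coords
      then (case inv_into policy_coords coord_index n of (i, x, a) \<Rightarrow> \<gamma> i x a) else 0)"

definition decode_policy :: "(nat \<Rightarrow> real) \<Rightarrow> 'i \<Rightarrow> 'x \<Rightarrow> 'a \<Rightarrow> real" where
  "decode_policy y i x a =
     (if a \<in> A i then simplex_retract (A i) (\<lambda>b. y (coord_index (i, x, b))) a else 0)"

lemma coord_index_less: "a \<in> A i \<Longrightarrow> coord_index (i, x, a) < card policy_coords"
  and inv_into_coord_index:
    "a \<in> A i \<Longrightarrow> inv_into policy_coords coord_index (coord_index (i, x, a)) = (i, x, a)"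
proof -
  have "finite policy_coords"
    unfolding policy_coords_def by (intro finite_SigmaI finite_cartesian_product finite_actions) auto
  then have bij: "bij_betw coord_index policy_coords {0..<card policy_coords}"
    unfolding coord_index_def by (rule someI_ex[OF ex_bij_betw_finite_nat])
  assume "a \<in> A i"
  then have "(i, x, a) \<in> policy_coords" by (simp add: policy_coords_def)
  then show "coord_index (i, x, a) < card policy_coords"
    and "inv_into policy_coords coord_index (coord_index (i, x, a)) = (i, x, a)"
    using bij_betw_apply[OF bij] bij_betw_imp_inj_on[OF bij] by auto
qed

lemma encode_policy_in_unit_cube:
  assumes "\<gamma> \<in> JP"
  shows "encode_policy \<gamma> \<in> unit_cube (card policy_coords)"
proof -
  have pol: "is_policy (A i) (\<gamma> i)" for i
    using assms by (simp add: joint_policies_def)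
  have "0 \<le> \<gamma> i x a \<and> \<gamma> i x a \<le> 1" for i x a
    using is_policy_nonneg[OF pol] is_policy_le_1[OF pol finite_actions] by simp
  then show ?thesis
    by (auto simp: encode_policy_def unit_cube_def split: prod.split)
qed

lemma decode_policy_in_joint_policies: "y \<in> unit_cube (card policy_coords) \<Longrightarrow> decode_policy y \<in> JP"
  using coord_index_less finite_actions actions_nonempty
  by (auto simp: joint_policies_def is_policy_def decode_policy_def unit_cube_def
      intro!: simplex_retract_nonneg sum_simplex_retract cong: sum.cong)

lemma decode_encode_policy:
  assumes "\<gamma> \<in> JP"
  shows "decode_policy (encode_policy \<gamma>) = \<gamma>"
proof (intro ext)
  fix i x a
  have pol: "is_policy (A i) (\<gamma> i)" using assms by (simp add: joint_policies_def)
  have "decode_policy (encode_policy \<gamma>) i x a = simplex_retract (A i) (\<gamma> i x) a" if "a \<in> A i"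
    unfolding decode_policy_def using that
    by (simp, intro simplex_retract_cong) (simp_all add: encode_policy_def coord_index_less inv_into_coord_index)
  then show "decode_policy (encode_policy \<gamma>) i x a = \<gamma> i x a"
    using is_policy_sum[OF pol] is_policy_outside[OF pol]
    by (cases "a \<in> A i") (simp_all add: decode_policy_def simplex_retract_id)
qed

lemma encode_policy_tendsto:
  "policies_tendsto \<gamma>s \<gamma> \<Longrightarrow> (\<lambda>k. encode_policy (\<gamma>s k) n) \<longlonglongrightarrow> encode_policy \<gamma> n"
  by (auto simp: encode_policy_def policies_tendstoD split: prod.split)

lemma decode_policy_tendsto:
  "(\<And>n. (\<lambda>k. ys k n) \<longlonglongrightarrow> y n) \<Longrightarrow> policies_tendsto (\<lambda>k. decode_policy (ys k)) (decode_policy y)"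
  by (auto simp: policies_tendsto_def decode_policy_def finite_actions actions_nonempty
      intro!: simplex_retract_tendsto)

lemma joint_policies_fixpoint:
  assumes into: "\<And>\<gamma>. \<gamma> \<in> JP \<Longrightarrow> F \<gamma> \<in> JP"
    and cont: "\<And>\<gamma>s \<gamma>. (\<And>k. \<gamma>s k \<in> JP) \<Longrightarrow> \<gamma> \<in> JP \<Longrightarrow> policies_tendsto \<gamma>s \<gamma>
                 \<Longrightarrow> policies_tendsto (\<lambda>k. F (\<gamma>s k)) (F \<gamma>)"
  obtains \<gamma> where "\<gamma> \<in> JP" "F \<gamma> = \<gamma>"
proof -
  let ?F = "encode_policy \<circ> F \<circ> decode_policy"
  obtain z where "z \<in> unit_cube (card policy_coords)" and z: "?F z = z"
  proof (rule brouwer_unit_cube)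
    show "?F y \<in> unit_cube (card policy_coords)" if "y \<in> unit_cube (card policy_coords)" for y
      using that by (simp add: encode_policy_in_unit_cube into decode_policy_in_joint_policies)
    show "(\<lambda>k. ?F (ys k) n) \<longlonglongrightarrow> ?F y n"
      if "\<And>k. ys k \<in> unit_cube (card policy_coords)" "\<And>j. (\<lambda>k. ys k j) \<longlonglongrightarrow> y j"
        "y \<in> unit_cube (card policy_coords)" for ys y n
      using that
      by (simp add: encode_policy_tendsto cont decode_policy_in_joint_policies decode_policy_tendsto)
  qed
  then have "F (decode_policy z) \<in> JP"
    by (simp add: into decode_policy_in_joint_policies)
  moreover from this have "decode_policy z = F (decode_policy z)"
    using decode_encode_policy z by (metis comp_apply)
  ultimately show ?thesis using that by metis
qed

lemma equilibrium_exists: "eps \<ge> 0 \<Longrightarrow> \<exists>\<gamma>. is_equilibrium A c beta P eps \<gamma>"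
  using joint_policies_fixpoint[of nash_map] nash_map_in_joint_policies nash_map_tendsto
    equilibrium_if_nash_fixpoint by metis

end

section \<open>Symmetric games and revision paths\<close>

locale symmetric_discounted_game = discounted_game +
  assumes symmetric: "symmetric_game A c beta P"
begin

lemma actions_eq: "A i = A j"
  and discount_eq: "beta i = beta j"
  using symmetric by (auto simp: symmetric_game_def)

lemma cost_permute: "bij \<sigma> \<Longrightarrow> u \<in> JA \<Longrightarrow> c i x (u \<circ> \<sigma>) = c (\<sigma> i) x u"
  and transition_permute: "bij \<sigma> \<Longrightarrow> u \<in> JA \<Longrightarrow> P x (u \<circ> \<sigma>) = P x u"
  using symmetric by (auto simp: symmetric_game_def)

lemma permute_joint_action:
  assumes "u \<in> JA"
  shows "u \<circ> f \<in> JA"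
proof -
  have "u (f i) \<in> A (f i)" for i
    using assms by (simp add: joint_actions_def)
  then have "u (f i) \<in> A i" for i
    using actions_eq by metis
  then show ?thesis by (simp add: joint_actions_def)
qed

lemma sum_joint_actions_permute:
  assumes "bij \<sigma>"
  shows "(\<Sum>u\<in>JA. h (u \<circ> \<sigma>)) = (\<Sum>u\<in>JA. h u)"
proof (rule sum.reindex_bij_betw)
  have "\<sigma> \<circ> inv \<sigma> = id" "inv \<sigma> \<circ> \<sigma> = id"
    using assms by (simp_all add: bij_is_inj bij_is_surj inv_o_cancel flip: surj_iff)
  then show "bij_betw (\<lambda>u. u \<circ> \<sigma>) JA JA"
    by (intro bij_betw_byWitness[where f' = "\<lambda>u. u \<circ> inv \<sigma>"])
      (auto simp: comp_assoc intro: permute_joint_action)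
qed

lemma exp_cost_permute:
  assumes "bij \<sigma>"
  shows "E (\<gamma> \<circ> \<sigma>) i x = E \<gamma> (\<sigma> i) x"
proof -
  have "E (\<gamma> \<circ> \<sigma>) i x = (\<Sum>u\<in>JA. joint_prob (\<gamma> \<circ> \<sigma>) x (u \<circ> \<sigma>) * c i x (u \<circ> \<sigma>))"
    unfolding exp_cost_def by (rule sum_joint_actions_permute[OF assms, symmetric])
  also have "\<dots> = E \<gamma> (\<sigma> i) x"
    unfolding exp_cost_def using assms by (intro sum.cong) (simp_all add: joint_prob_permute cost_permute)
  finally show ?thesis .
qed

lemma trans_pol_permute:
  assumes "bij \<sigma>"
  shows "T (\<gamma> \<circ> \<sigma>) x y = T \<gamma> x y"
proof -
  have "T (\<gamma> \<circ> \<sigma>) x y = (\<Sum>u\<in>JA. joint_prob (\<gamma> \<circ> \<sigma>) x (u \<circ> \<sigma>) * P x (u \<circ> \<sigma>) y)"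
    unfolding trans_pol_def by (rule sum_joint_actions_permute[OF assms, symmetric])
  also have "\<dots> = T \<gamma> x y"
    unfolding trans_pol_def using assms
    by (intro sum.cong) (simp_all add: joint_prob_permute transition_permute)
  finally show ?thesis .
qed

lemma cost_J_permute:
  assumes "bij \<sigma>"
  shows "J i (\<gamma> \<circ> \<sigma>) x = J (\<sigma> i) \<gamma> x"
proof -
  have "state_dist A P (\<gamma> \<circ> \<sigma>) t x y = state_dist A P \<gamma> t x y" for t y
    by (induction t arbitrary: y) (simp_all add: trans_pol_permute[OF assms])
  then show ?thesis
    by (simp add: cost_J_def exp_cost_permute[OF assms] discount_eq[of i "\<sigma> i"])
qed

lemma cost_J_deviation_swap:
  assumes "\<gamma> i = \<gamma> j"
  shows "J j (\<gamma>(j := \<pi>)) x = J i (\<gamma>(i := \<pi>)) x"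
proof -
  let ?\<tau> = "Transposition.transpose i j"
  have "\<gamma>(j := \<pi>) \<circ> ?\<tau> = \<gamma>(i := \<pi>)"
    using assms by (auto simp: fun_eq_iff Transposition.transpose_def)
  then show ?thesis
    using cost_J_permute[of ?\<tau> i "\<gamma>(j := \<pi>)" x] by simp
qed

lemma best_response_iff_same_policy:
  assumes "\<gamma> i = \<gamma> j"
  shows "best_response A c beta P eps i \<gamma> (\<gamma> i) \<longleftrightarrow> best_response A c beta P eps j \<gamma> (\<gamma> j)"
  using cost_J_deviation_swap[OF assms] cost_J_deviation_swap[OF assms, of "\<gamma> j"] assms
  unfolding best_response_def by (simp add: actions_eq[of i j])

lemma copy_satisfied_policy:
  assumes "\<gamma> \<in> JP" and "best_response A c beta P eps s \<gamma> (\<gamma> s)"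
    and "\<not> best_response A c beta P eps u \<gamma> (\<gamma> u)"
  defines "\<gamma>' \<equiv> \<lambda>i. if best_response A c beta P eps i \<gamma> (\<gamma> i) then \<gamma> i else \<gamma> s"
  shows "\<gamma>' \<in> JP" and "card (range \<gamma>') < card (range \<gamma>)"
proof -
  have pol: "is_policy (A j) (\<gamma> j)" for j
    using assms(1) by (simp add: joint_policies_def)
  have "is_policy (A i) (\<gamma>' i)" for i
    using pol[of i] pol[of s] actions_eq[of s i] by (simp add: \<gamma>'_def)
  then show "\<gamma>' \<in> JP" by (simp add: joint_policies_def)
  have "\<gamma> u \<notin> range \<gamma>'"
  proof
    assume "\<gamma> u \<in> range \<gamma>'"
    then obtain k where "best_response A c beta P eps k \<gamma> (\<gamma> k)" "\<gamma> u = \<gamma> k"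
      using assms(2) by (auto simp: \<gamma>'_def split: if_splits)
    then show False
      using assms(3) best_response_iff_same_policy[of \<gamma> u k] by simp
  qed
  then have "range \<gamma>' \<subset> range \<gamma>"
    by (auto simp: \<gamma>'_def)
  then show "card (range \<gamma>') < card (range \<gamma>)"
    by (simp add: psubset_card_mono)
qed

lemma revision_path_to_equilibrium:
  assumes "eps \<ge> 0" "\<gamma> \<in> JP"
  shows "\<exists>\<gamma>s L. \<gamma>s 0 = \<gamma> \<and> revision_path A c beta P eps \<gamma>s L \<and> is_equilibrium A c beta P eps (\<gamma>s L)"
  using assms(2)
proof (induction "card (range \<gamma>)" arbitrary: \<gamma> rule: less_induct)
  case less
  let ?sat = "\<lambda>i. best_response A c beta P eps i \<gamma> (\<gamma> i)"
  consider "\<forall>i. ?sat i" | "\<forall>i. \<not> ?sat i" | s u where "?sat s" "\<not> ?sat u" by blast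
  then show ?case
  proof cases
    case 1
    then have "revision_path A c beta P eps (\<lambda>_. \<gamma>) 0" "is_equilibrium A c beta P eps \<gamma>"
      using less.prems by (simp_all add: revision_path_const is_equilibrium_def)
    then show ?thesis
      by (intro exI[of _ "\<lambda>_. \<gamma>"] exI[of _ 0]) simp
  next
    case 2
    obtain e where e: "is_equilibrium A c beta P eps e"
      using equilibrium_exists[OF assms(1)] by blast
    then have "revision_path A c beta P eps (case_nat \<gamma> (\<lambda>_. e)) 1"
      using 2 less.prems revision_path_Cons[of \<gamma> A c beta P eps "\<lambda>_. e" 0]
      by (simp add: is_equilibrium_def revision_path_const)
    with e show ?thesis
      by (intro exI[of _ "case_nat \<gamma> (\<lambda>_. e)"] exI[of _ 1]) simp
  next
    case 3
    define \<gamma>' where "\<gamma>' i = (if ?sat i then \<gamma> i else \<gamma> s)" for i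
    obtain \<gamma>s L where "\<gamma>s 0 = \<gamma>'" "revision_path A c beta P eps \<gamma>s L"
      "is_equilibrium A c beta P eps (\<gamma>s L)"
      using less.hyps copy_satisfied_policy[OF less.prems 3] unfolding \<gamma>'_def by blast
    then show ?thesis
      using revision_path_Cons[OF less.prems]
      by (intro exI[of _ "case_nat \<gamma> \<gamma>s"] exI[of _ "Suc L"]) (simp add: \<gamma>'_def)
  qed
qed

end

theorem theorem1:
  fixes A :: "'i::finite \<Rightarrow> 'a set"
    and c :: "'i \<Rightarrow> 'x::finite \<Rightarrow> ('i \<Rightarrow> 'a) \<Rightarrow> real"
    and beta :: "'i \<Rightarrow> real"
    and P :: "'x \<Rightarrow> ('i \<Rightarrow> 'a) \<Rightarrow> 'x \<Rightarrow> real"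
    and eps :: real
  assumes "stochastic_game A c beta P"
    and "symmetric_game A c beta P"
    and "eps \<ge> 0"
  shows "\<forall>\<gamma>0\<in>joint_policies A. \<exists>\<gamma>s L. \<gamma>s 0 = \<gamma>0 \<and>
           revision_path A c beta P eps \<gamma>s L \<and> is_equilibrium A c beta P eps (\<gamma>s L)"
proof -
  interpret symmetric_discounted_game A c beta P
    using assms(1,2) by unfold_locales
  show ?thesis
    using revision_path_to_equilibrium[OF assms(3)] by blast
qed

end
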